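(* Let $F$ be a $2$-edge-coloured graph on $n\ge 2$ vertices which contains no alternating cycle. Then there is an ordering $v_1,\dots,v_n$ of $V(F)$ such that for every $1\le i\le n$ there is a colour $c_i\in\{\text{red},\text{blue}\}$ for which $v_i$ has fewer than $\log_2 n$ neighbours $v_j$ with $j>i$ such that the edge $\{v_i,v_j\}$ has colour $c_i$.
   Context: A $2$-edge-coloured graph is a finite simple graph each of whose edges is coloured red or blue. An alternating cycle is a cycle whose consecutive edges have alternating colours. *)

theory Defs
  imports Complex_Main
begin

datatype colour = Red | Blue

text \<open>A 2-edge-coloured finite simple graph on vertex set V: col u v = Some c iff
  {u,v} is an edge of colour c; None means no edge.\<close>
definition two_edge_coloured_graph :: "'a set \<Rightarrow> ('a \<Rightarrow> 'a \<Rightarrow> colour option) \<Rightarrow> bool" where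
  "two_edge_coloured_graph V col \<longleftrightarrow> finite V \<and>
     (\<forall>u v. col u v = col v u) \<and> (\<forall>v. col v v = None) \<and>
     (\<forall>u v. col u v \<noteq> None \<longrightarrow> u \<in> V \<and> v \<in> V)"

definition alternating_cycle :: "('a \<Rightarrow> 'a \<Rightarrow> colour option) \<Rightarrow> 'a list \<Rightarrow> bool" where
  "alternating_cycle col cs \<longleftrightarrow> (let k = length cs in
     k \<ge> 3 \<and> distinct cs \<and>
     (\<forall>i<k. col (cs!i) (cs!((i+1) mod k)) \<noteq> None) \<and>
     (\<forall>i<k. col (cs!i) (cs!((i+1) mod k)) \<noteq> col (cs!((i+1) mod k)) (cs!((i+2) mod k))))"

end

theory Submission
  imports Defs
begin

(* Double every vertex v of F into copies (v, red) and (v, blue), match the two copies, and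
   join (u, c) to (w, c) whenever uw is an edge of colour c. An alternating cycle for this
   perfect matching projects to an alternating cycle of F, so the matching is the unique
   perfect matching of the doubled graph. By Kotzig's theorem some matching edge {u, m u} is
   then a bridge; it is proved here from a longest alternating path, whose first vertex is
   either a leaf or closes a blossom that can be contracted. Deleting the bridge leaves two
   parts, each attached to the rest only through one endpoint of the bridge. The smaller part
   S has at most (N - 2)/2 of the N vertices and is again uniquely matched, so by induction
   it contains a vertex of degree at most 1 or less than log2 |S| + 1 \<le> log2 N. For a copy (v, c) of degree d the vertex v has d - 1 neighbours of
   colour c, which gives a vertex with fewer than log2 n neighbours in some colour; removing
   it and recursing yields the ordering. *)

section \<open>Alternating paths and cycles in matched graphs\<close>

locale matched_graph =
  fixes V :: "'b set" and E :: "'b \<Rightarrow> 'b \<Rightarrow> bool" and m :: "'b \<Rightarrow> 'b"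
  assumes finite_V: "finite V"
    and edge_in_V: "E x y \<Longrightarrow> x \<in> V"
    and edge_sym: "E x y \<Longrightarrow> E y x"
    and edge_irrefl: "E x y \<Longrightarrow> x \<noteq> y"
    and partner_in_V: "x \<in> V \<Longrightarrow> m x \<in> V"
    and partner_neq: "x \<in> V \<Longrightarrow> m x \<noteq> x"
    and partner_partner: "x \<in> V \<Longrightarrow> m (m x) = x"
    and partner_edge: "x \<in> V \<Longrightarrow> E x (m x)"
begin

lemma edge_in_V': "E x y \<Longrightarrow> y \<in> V"
  using edge_in_V edge_sym by blast

end

text \<open>The list \<open>[x\<^sub>1, \<dots>, x\<^sub>k]\<close> stands for the path
  \<open>x\<^sub>1, m x\<^sub>1, x\<^sub>2, m x\<^sub>2, \<dots>, x\<^sub>k, m x\<^sub>k\<close>,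
  whose edges alternate between the matching edges \<open>{x\<^sub>i, m x\<^sub>i}\<close> and arbitrary
  edges \<open>{m x\<^sub>i, x\<^sub>i\<^sub>+\<^sub>1}\<close>.\<close>
definition alt_path :: "'b set \<Rightarrow> ('b \<Rightarrow> 'b \<Rightarrow> bool) \<Rightarrow> ('b \<Rightarrow> 'b) \<Rightarrow> 'b list \<Rightarrow> bool" where
  "alt_path V E m xs \<longleftrightarrow>
     set xs \<subseteq> V \<and> distinct (xs @ map m xs) \<and> successively (\<lambda>x y. E (m x) y) xs"

definition alt_cycle :: "'b set \<Rightarrow> ('b \<Rightarrow> 'b \<Rightarrow> bool) \<Rightarrow> ('b \<Rightarrow> 'b) \<Rightarrow> 'b list \<Rightarrow> bool" where
  "alt_cycle V E m xs \<longleftrightarrow> 2 \<le> length xs \<and> alt_path V E m xs \<and> E (m (last xs)) (hd xs)"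

definition edge_without :: "('b \<Rightarrow> 'b \<Rightarrow> bool) \<Rightarrow> 'b \<Rightarrow> 'b \<Rightarrow> 'b \<Rightarrow> 'b \<Rightarrow> bool" where
  "edge_without E u v x y \<longleftrightarrow> E x y \<and> {x, y} \<noteq> {u, v}"

definition matching_bridge :: "('b \<Rightarrow> 'b \<Rightarrow> bool) \<Rightarrow> ('b \<Rightarrow> 'b) \<Rightarrow> 'b \<Rightarrow> bool" where
  "matching_bridge E m u \<longleftrightarrow> \<not> (edge_without E u (m u))\<^sup>*\<^sup>* u (m u)"

lemma alt_path_append_iff:
  "alt_path V E m (xs @ ys) \<longleftrightarrow> alt_path V E m xs \<and> alt_path V E m ys \<and>
     (set xs \<union> m ` set xs) \<inter> (set ys \<union> m ` set ys) = {} \<and>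
     (xs = [] \<or> ys = [] \<or> E (m (last xs)) (hd ys))"
  unfolding alt_path_def by (auto simp: successively_append_iff)

lemma alt_path_take: "alt_path V E m xs \<Longrightarrow> alt_path V E m (take n xs)"
  using alt_path_append_iff[of V E m "take n xs" "drop n xs"] by simp

lemma alt_path_drop: "alt_path V E m xs \<Longrightarrow> alt_path V E m (drop n xs)"
  using alt_path_append_iff[of V E m "take n xs" "drop n xs"] by simp

lemma alt_path_subset: "alt_path V E m xs \<Longrightarrow> set xs \<subseteq> V"
  unfolding alt_path_def by simp

lemma alt_path_edge: "alt_path V E m xs \<Longrightarrow> Suc i < length xs \<Longrightarrow> E (m (xs!i)) (xs!Suc i)"
  unfolding alt_path_def using successively_nth by fastforce

lemma alt_path_nth_eq_iff:
  "alt_path V E m xs \<Longrightarrow> i < length xs \<Longrightarrow> j < length xs \<Longrightarrow> xs!i = xs!j \<longleftrightarrow> i = j"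
  unfolding alt_path_def by (simp add: nth_eq_iff_index_eq)

lemma alt_path_nth_neq_partner:
  "alt_path V E m xs \<Longrightarrow> i < length xs \<Longrightarrow> j < length xs \<Longrightarrow> xs!i \<noteq> m (xs!j)"
  unfolding alt_path_def by (auto dest!: nth_mem)

lemma alt_path_mono:
  assumes "alt_path V E m xs" "V \<subseteq> V'" "\<And>x y. x \<in> set xs \<Longrightarrow> y \<in> set xs \<Longrightarrow> E (m x) y \<Longrightarrow> E' (m x) y"
  shows "alt_path V' E' m xs"
  using assms unfolding alt_path_def by (auto intro: successively_mono)

lemma alt_cycle_rotate1: "alt_cycle V E m (x # xs) \<Longrightarrow> alt_cycle V E m (xs @ [x])"
  unfolding alt_cycle_def alt_path_def
  by (cases xs) (auto simp: successively_append_iff successively_Cons hd_append split: if_splits)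

lemma alt_cycle_rotate: "alt_cycle V E m (ys @ zs) \<Longrightarrow> alt_cycle V E m (zs @ ys)"
proof (induction ys arbitrary: zs)
  case (Cons y ys)
  then have "alt_cycle V E m ((zs @ [y]) @ ys)"
    using alt_cycle_rotate1[of V E m y "ys @ zs"] by fastforce
  then show ?case by simp
qed simp

lemma alt_cycle_of_path:
  "alt_path V E m xs \<Longrightarrow> 2 \<le> length xs \<Longrightarrow> E (m (last xs)) (hd xs) \<Longrightarrow> alt_cycle V E m xs"
  unfolding alt_cycle_def by simp

context matched_graph
begin

lemma alt_path_partner_rev:
  assumes "alt_path V E m xs"
  shows "alt_path V E m (map m (rev xs))"
proof -
  have xs: "set xs \<subseteq> V" using alt_path_subset[OF assms] .
  have mm: "map m (map m xs) = xs" using xs partner_partner by (auto intro!: map_idI)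
  then have "map m (map m (rev xs)) = rev xs" by (metis rev_map)
  moreover have "set (map m (rev xs)) \<subseteq> V" using xs partner_in_V by auto
  moreover have "successively (\<lambda>x y. E (m y) x) (map m xs)"
    unfolding successively_map
  proof (rule successively_mono)
    show "successively (\<lambda>x y. E (m x) y) xs" using assms unfolding alt_path_def by simp
    fix x y assume "x \<in> set xs" "y \<in> set xs" "E (m x) y"
    then show "E (m (m y)) (m x)" using xs partner_partner edge_sym by (metis subsetD)
  qed
  ultimately show ?thesis
    using assms unfolding alt_path_def by (auto simp: rev_map[symmetric])
qed

lemma alt_cycle_partner_rev:
  assumes "alt_cycle V E m xs"
  shows "alt_cycle V E m (map m (rev xs))"
proof -
  have len: "2 \<le> length xs" and path: "alt_path V E m xs" and close: "E (m (last xs)) (hd xs)"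
    using assms unfolding alt_cycle_def by simp_all
  then have ne: "xs \<noteq> []" by auto
  then have "hd xs \<in> V" using hd_in_set alt_path_subset[OF path] by blast
  then have "m (m (hd xs)) = hd xs" by (rule partner_partner)
  then have "E (m (last (map m (rev xs)))) (hd (map m (rev xs)))"
    using ne edge_sym[OF close] by (simp add: last_map hd_map last_rev hd_rev)
  with len alt_path_partner_rev[OF path] show ?thesis by (simp add: alt_cycle_def)
qed

lemma finite_alt_paths: "finite {xs. alt_path V E m xs}"
proof (rule finite_subset)
  show "{xs. alt_path V E m xs} \<subseteq> {xs. set xs \<subseteq> V \<and> length xs \<le> card V}"
    using finite_V unfolding alt_path_def by (auto simp: distinct_card[symmetric] card_mono)
  show "finite {xs. set xs \<subseteq> V \<and> length xs \<le> card V}"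
    using finite_lists_length_le[OF finite_V] .
qed

lemma longest_alt_path_exists:
  assumes "V \<noteq> {}"
  shows "\<exists>p. alt_path V E m p \<and> p \<noteq> [] \<and> (\<forall>q. alt_path V E m q \<longrightarrow> length q \<le> length p)"
proof -
  obtain v where v: "v \<in> V" using assms by blast
  then have single: "alt_path V E m [v]" unfolding alt_path_def using partner_neq[OF v, symmetric] by auto
  define P where "P = {xs. alt_path V E m xs}"
  have fin: "finite (length ` P)" using finite_alt_paths unfolding P_def by simp
  have "Max (length ` P) \<in> length ` P" using fin single unfolding P_def by (intro Max_in) auto
  then obtain p where p: "alt_path V E m p" "length p = Max (length ` P)" unfolding P_def by auto
  have max: "length q \<le> length p" if "alt_path V E m q" for q
    using that fin p(2) unfolding P_def by simp
  from max[OF single] have "p \<noteq> []" by auto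
  with p max show ?thesis by blast
qed

lemma alt_cycle_of_first_partner_edge:
  assumes "alt_path V E m p" "0 < s" "s < length p" "E (p!0) (m (p!s))"
  shows "alt_cycle V E m (take (Suc s) p)"
proof (rule alt_cycle_of_path)
  have "last (take (Suc s) p) = p!s" "hd (take (Suc s) p) = p!0"
    using assms(3) by (simp add: take_Suc_conv_app_nth, cases p, auto)
  then show "E (m (last (take (Suc s) p))) (hd (take (Suc s) p))"
    using edge_sym[OF assms(4)] by simp
qed (use assms alt_path_take in auto)

lemma longest_alt_path_first_neighbour:
  assumes p: "alt_path V E m p" "p \<noteq> []" and max: "\<And>q. alt_path V E m q \<Longrightarrow> length q \<le> length p"
    and y: "E (hd p) y"
  shows "y \<in> set p \<union> m ` set p"
proof (rule ccontr)
  assume y_out: "y \<notin> set p \<union> m ` set p"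
  have yV: "y \<in> V" using y edge_in_V' by blast
  have p_V: "set p \<subseteq> V" using alt_path_subset[OF p(1)] .
  have "m y \<notin> set p"
    using y_out partner_partner[OF yV] by (metis UnI2 imageI)
  moreover have "m y \<notin> m ` set p"
    using y_out p_V partner_partner yV by (metis UnI1 imageE subsetD)
  ultimately have "alt_path V E m (m y # p)"
    using p y_out yV partner_in_V partner_neq[OF yV] partner_partner[OF yV] edge_sym[OF y]
    unfolding alt_path_def by (cases p) (auto simp: successively_Cons)
  then show False using max by fastforce
qed

lemma matching_bridge_of_leaf:
  assumes "u \<in> V" "\<And>y. E u y \<Longrightarrow> y = m u"
  shows "matching_bridge E m u"
  unfolding matching_bridge_def
proof
  assume "(edge_without E u (m u))\<^sup>*\<^sup>* u (m u)"
  then show False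
  proof (cases rule: converse_rtranclpE)
    case base then show False using partner_neq[OF assms(1)] by simp
  next
    case (step y) then show False using assms(2) unfolding edge_without_def by auto
  qed
qed

end

section \<open>Kotzig's theorem\<close>

text \<open>An alternating path \<open>p\<close> whose first vertex \<open>p!0\<close> is adjacent to a later
  vertex \<open>p!t\<close> closes the blossom \<open>D\<close> formed by \<open>p!0, \<dots>, p!(t-1)\<close> and their partners.
  Contracting \<open>D\<close> into the vertex \<open>p!t\<close> yields a smaller matched graph; alternating cycles
  and matching bridges transfer between the two graphs.\<close>
locale blossom = matched_graph +
  fixes p :: "'b list" and t :: nat
  assumes path: "alt_path V E m p"
    and no_alt_cycle: "\<nexists>cs. alt_cycle V E m cs"
    and t_pos: "0 < t" and t_less: "t < length p"
    and first_edge: "E (p!0) (p!t)"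
begin

definition "tip = p!t"
definition "stem = take t p"
definition "D = set stem \<union> m ` set stem"
definition "contract x = (if x \<in> D then tip else x)"
definition "Vc = V - D"
definition "Ec x y \<longleftrightarrow> x \<in> Vc \<and> y \<in> Vc \<and> x \<noteq> y \<and> (\<exists>x0 y0. E x0 y0 \<and> contract x0 = x \<and> contract y0 = y)"

lemma path_subset: "set p \<subseteq> V" using alt_path_subset[OF path] .

lemma tip_in_V: "tip \<in> V" unfolding tip_def using path_subset t_less by (meson nth_mem subsetD)

lemma stem_subset: "set stem \<subseteq> V" using path_subset unfolding stem_def by (meson in_set_takeD subsetD subsetI)

lemma D_subset: "D \<subseteq> V" using stem_subset partner_in_V unfolding D_def by auto

lemma D_partner: "x \<in> D \<Longrightarrow> m x \<in> D"
  using stem_subset partner_partner unfolding D_def by (auto simp: subset_iff)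

lemma tip_notin_D: "tip \<notin> D" "m tip \<notin> D"
proof -
  have "D \<inter> (set (drop t p) \<union> m ` set (drop t p)) = {}"
    using alt_path_append_iff[of V E m stem "drop t p"] path unfolding D_def stem_def by auto
  moreover have "tip \<in> set (drop t p)" unfolding tip_def using Cons_nth_drop_Suc[OF t_less] by (metis list.set_intros(1))
  ultimately show "tip \<notin> D" "m tip \<notin> D" by auto
qed

lemma first_in_D: "p!0 \<in> D"
proof -
  have "stem ! 0 \<in> set stem" using t_pos t_less unfolding stem_def by (intro nth_mem) simp
  then show ?thesis using t_pos unfolding D_def stem_def by simp
qed

lemma D_cases:
  assumes "x \<in> D"
  obtains s where "s < t" "x = p!s" | s where "s < t" "x = m (p!s)"
  using assms t_less unfolding D_def stem_def by (auto simp: in_set_conv_nth)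

lemma prefix_in_D: "s < t \<Longrightarrow> set (take (Suc s) p) \<subseteq> D \<and> m ` set (take (Suc s) p) \<subseteq> D"
  using set_take_subset_set_take[of "Suc s" t p] unfolding D_def stem_def by auto

text \<open>Each edge from \<open>D\<close> to \<open>m tip\<close> would close an alternating cycle.\<close>
lemma no_edge_D_partner_tip:
  assumes "x \<in> D" shows "\<not> E x (m tip)"
proof
  assume ex: "E x (m tip)"
  from assms show False
  proof (cases rule: D_cases)
    case (1 s)
    let ?L = "drop s (take (Suc t) p)"
    have "hd ?L = p!s" "last ?L = p!t" "2 \<le> length ?L"
      using 1 t_less by (simp_all add: hd_drop_conv_nth last_drop take_Suc_conv_app_nth)
    then have "alt_cycle V E m ?L"
      using edge_sym[OF ex] alt_path_drop[OF alt_path_take[OF path]] 1 tip_def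
      by (intro alt_cycle_of_path) auto
    then show False using no_alt_cycle by blast
  next
    case (2 s)
    let ?L = "take (Suc s) p @ [m tip]"
    have tip: "m tip \<in> V" "m (m tip) = tip" "m tip \<noteq> tip"
      using tip_in_V partner_in_V partner_partner partner_neq by auto
    have "alt_path V E m [m tip]" unfolding alt_path_def using tip by auto
    moreover have "last (take (Suc s) p) = p!s" using 2 t_less by (simp add: take_Suc_conv_app_nth)
    ultimately have "alt_path V E m ?L" unfolding alt_path_append_iff
      using alt_path_take[OF path] prefix_in_D[OF 2(1)] tip_notin_D tip 2 ex by auto
    moreover have "E (m (last ?L)) (hd ?L)"
      using tip edge_sym[OF first_edge] tip_def t_less by (cases p) (auto simp: hd_append)
    ultimately have "alt_cycle V E m ?L" using t_less by (intro alt_cycle_of_path) auto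
    then show False using no_alt_cycle by blast
  qed
qed

lemma Vc_partner: "x \<in> Vc \<Longrightarrow> m x \<in> Vc"
  unfolding Vc_def using partner_in_V partner_partner D_partner by (metis Diff_iff)

lemma contract_Vc: "x \<in> Vc \<Longrightarrow> contract x = x" unfolding contract_def Vc_def by simp

lemma tip_in_Vc: "tip \<in> Vc" "m tip \<in> Vc" unfolding Vc_def using tip_in_V tip_notin_D partner_in_V by auto

lemma contract_in_Vc: "x \<in> V \<Longrightarrow> contract x \<in> Vc"
  unfolding contract_def Vc_def using tip_in_V tip_notin_D by auto

lemma D_Vc_disjoint: "D \<inter> Vc = {}" unfolding Vc_def by auto

lemma contracted_matched_graph: "matched_graph Vc Ec m"
proof
  show "finite Vc" unfolding Vc_def using finite_V by simp
next
  fix x assume x: "x \<in> Vc"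
  then have "x \<in> V" unfolding Vc_def by simp
  then show "m x \<noteq> x" "m (m x) = x" using partner_neq partner_partner by auto
  show "Ec x (m x)" unfolding Ec_def
    using x Vc_partner[OF x] contract_Vc[OF x] contract_Vc[OF Vc_partner[OF x]] \<open>m x \<noteq> x\<close>
      partner_edge[OF \<open>x \<in> V\<close>] by metis
  show "m x \<in> Vc" using Vc_partner[OF x] .
next
  fix x y assume "Ec x y"
  then show "x \<in> Vc" "x \<noteq> y" "Ec y x" unfolding Ec_def using edge_sym by blast+
qed

lemma card_Vc_less: "card Vc < card V"
proof -
  have "Vc \<subset> V" unfolding Vc_def using first_in_D D_subset by blast
  then show ?thesis using finite_V by (simp add: psubset_card_mono)
qed

lemma Ec_imp_E: "Ec x y \<Longrightarrow> x \<noteq> tip \<Longrightarrow> y \<noteq> tip \<Longrightarrow> E x y"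
  unfolding Ec_def contract_def by (metis (full_types))

text \<open>Every vertex of the blossom is the start of an alternating path inside \<open>D\<close> that
  leads back to \<open>tip\<close>: go forward along the stem, or backward along it through partners.\<close>
lemma alt_path_to_tip:
  assumes "y \<in> D"
  obtains Q where "alt_path V E m Q" "Q \<noteq> []" "set Q \<subseteq> D" "m ` set Q \<subseteq> D"
    "hd Q = y" "E (m (last Q)) tip"
  using assms
proof (cases rule: D_cases)
  case (1 s)
  let ?Q = "drop s stem"
  have len: "length stem = t" using t_less unfolding stem_def by simp
  have "set ?Q \<subseteq> set stem" by (rule set_drop_subset)
  then have "set ?Q \<subseteq> D" "m ` set ?Q \<subseteq> D" unfolding D_def by blast+
  moreover have "hd ?Q = y" using 1 len unfolding stem_def by (simp add: hd_drop_conv_nth)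
  moreover have "last ?Q = p!(t-1)"
    using 1 len t_pos unfolding stem_def by (simp add: last_drop last_conv_nth)
  moreover have "E (m (p!(t-1))) tip"
    using alt_path_edge[OF path, of "t - 1"] t_pos t_less unfolding tip_def by simp
  moreover have "alt_path V E m ?Q" unfolding stem_def by (rule alt_path_drop[OF alt_path_take[OF path]])
  moreover have "?Q \<noteq> []" using 1 len by simp
  ultimately show ?thesis using that by simp
next
  case (2 s)
  let ?R = "take (Suc s) p"
  let ?Q = "map m (rev ?R)"
  have R_ne: "?R \<noteq> []" using t_less by (cases p) auto
  have R_V: "set ?R \<subseteq> V" using alt_path_subset[OF alt_path_take[OF path]] .
  have "m ` m ` set ?R = set ?R" using R_V partner_partner by (force simp: image_iff)
  then have "set ?Q \<subseteq> D" "m ` set ?Q \<subseteq> D" using prefix_in_D[OF 2(1)] by auto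
  moreover have "hd ?Q = y" using 2 t_less by (simp add: take_Suc_conv_app_nth)
  moreover have "last ?Q = m (p!0)" using R_ne t_less by (simp add: last_map last_rev, cases p, auto)
  moreover have "p!0 \<in> V" using path_subset t_less by (metis gr_zeroI not_less0 nth_mem subsetD)
  moreover have "alt_path V E m ?Q" using alt_path_partner_rev[OF alt_path_take[OF path]] .
  ultimately show ?thesis using that R_ne first_edge partner_partner unfolding tip_def by simp
qed

lemma alt_path_of_contracted_cycle_at_tip:
  assumes cyc: "alt_cycle Vc Ec m (tip # rs)"
  shows "alt_path V E m (tip # rs)"
proof -
  let ?c = "tip # rs"
  have dist: "distinct (?c @ map m ?c)" and c_Vc: "set ?c \<subseteq> Vc"
    and succ: "successively (\<lambda>x y. Ec (m x) y) ?c"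
    using cyc unfolding alt_cycle_def alt_path_def by simp_all
  then have tip_rs: "tip \<notin> set rs" and tip_m: "tip \<notin> m ` set ?c" by auto
  have rs_ne: "rs \<noteq> []" using cyc unfolding alt_cycle_def by auto
  have "Ec (m tip) (hd rs)" using succ rs_ne unfolding successively_Cons by auto
  moreover have "hd rs \<noteq> tip" using tip_rs rs_ne by (metis hd_in_set)
  ultimately have first: "E (m tip) (hd rs)" using Ec_imp_E tip_in_V partner_neq by metis
  have rest: "successively (\<lambda>x y. E (m x) y) rs"
  proof (rule successively_mono)
    show "successively (\<lambda>x y. Ec (m x) y) rs" using succ rs_ne unfolding successively_Cons by auto
    fix x y assume "x \<in> set rs" "y \<in> set rs" "Ec (m x) y"
    then show "E (m x) y" using Ec_imp_E tip_rs tip_m by (metis image_eqI list.set_intros(2))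
  qed
  show ?thesis unfolding alt_path_def
    using c_Vc dist first rest rs_ne unfolding Vc_def by (auto simp: successively_Cons)
qed

text \<open>An alternating cycle through \<open>tip\<close> in the contracted graph either lifts directly or
  is closed up through the blossom by \<open>alt_path_to_tip\<close>.\<close>
lemma contracted_alt_cycle_avoids_tip:
  assumes cyc: "alt_cycle Vc Ec m cs"
  shows "tip \<notin> set cs"
proof
  assume "tip \<in> set cs"
  then obtain ys zs where "cs = ys @ tip # zs" using split_list by metis
  let ?rs = "zs @ ys"
  let ?c = "tip # ?rs"
  have cyc': "alt_cycle Vc Ec m ?c" using alt_cycle_rotate[of Vc Ec m ys "tip # zs"] cyc \<open>cs = _\<close> by simp
  have c_path: "alt_path V E m ?c" by (rule alt_path_of_contracted_cycle_at_tip[OF cyc'])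
  have c_Vc: "set ?c \<subseteq> Vc" and tip_m: "tip \<notin> m ` set ?c"
    using cyc' unfolding alt_cycle_def alt_path_def by auto
  have rs_ne: "?rs \<noteq> []" using cyc' unfolding alt_cycle_def by auto
  have last_c: "last ?c = last ?rs" using rs_ne by (metis last_ConsR)
  have "Ec (m (last ?rs)) tip" using cyc' last_c unfolding alt_cycle_def by simp
  then obtain x0 y0 where xy: "E x0 y0" "contract x0 = m (last ?rs)" "contract y0 = tip"
    unfolding Ec_def by blast
  have "last ?rs \<in> set ?c" using rs_ne by (metis last_in_set list.set_intros(2))
  then have "x0 \<notin> D" using xy tip_m unfolding contract_def by force
  then have x0: "x0 = m (last ?rs)" using xy unfolding contract_def by simp
  show False
  proof (cases "y0 \<in> D")
    case False
    then have "y0 = tip" using xy unfolding contract_def by simp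
    then have "alt_cycle V E m ?c" using c_path xy x0 last_c cyc' unfolding alt_cycle_def by simp
    then show False using no_alt_cycle by blast
  next
    case True
    then obtain Q where Q: "alt_path V E m Q" "Q \<noteq> []" "set Q \<subseteq> D" "m ` set Q \<subseteq> D"
      "hd Q = y0" "E (m (last Q)) tip" by (rule alt_path_to_tip)
    have "m ` set ?c \<subseteq> Vc" using c_Vc Vc_partner by auto
    then have "(set Q \<union> m ` set Q) \<inter> (set ?c \<union> m ` set ?c) = {}"
      using Q(3,4) c_Vc D_Vc_disjoint by blast
    then have "alt_path V E m (Q @ ?c)" unfolding alt_path_append_iff using Q c_path by simp
    moreover have "2 \<le> length (Q @ ?c)" using Q(2) by (cases Q) simp_all
    moreover have "E (m (last (Q @ ?c))) (hd (Q @ ?c))" using Q(2,5) xy x0 last_c by simp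
    ultimately have "alt_cycle V E m (Q @ ?c)" by (rule alt_cycle_of_path)
    then show False using no_alt_cycle by blast
  qed
qed

lemma no_contracted_alt_cycle: "\<nexists>cs. alt_cycle Vc Ec m cs"
proof
  assume "\<exists>cs. alt_cycle Vc Ec m cs"
  then obtain cs where cyc: "alt_cycle Vc Ec m cs" by blast
  have "alt_cycle Vc Ec m (map m (rev cs))"
    using matched_graph.alt_cycle_partner_rev[OF contracted_matched_graph cyc] .
  from contracted_alt_cycle_avoids_tip[OF this] contracted_alt_cycle_avoids_tip[OF cyc]
  have tip_out: "x \<noteq> tip" "m x \<noteq> tip" if "x \<in> set cs" for x
    using that by force+
  have E_Ec: "E (m x) y" if "x \<in> set cs" "y \<in> set cs" "Ec (m x) y" for x y
    using Ec_imp_E[OF that(3)] tip_out that(1,2) by blast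
  have cs_ne: "cs \<noteq> []" using cyc unfolding alt_cycle_def by auto
  have "alt_path Vc Ec m cs" using cyc unfolding alt_cycle_def by simp
  then have "alt_path V E m cs"
    by (rule alt_path_mono) (auto simp: Vc_def E_Ec)
  moreover have "E (m (last cs)) (hd cs)"
    using cyc E_Ec cs_ne unfolding alt_cycle_def by simp
  ultimately have "alt_cycle V E m cs" using cyc unfolding alt_cycle_def by simp
  then show False using no_alt_cycle by blast
qed

lemma contract_reachable:
  assumes u: "u \<in> Vc" and reach: "(edge_without E u (m u))\<^sup>*\<^sup>* x z" and x: "x \<in> V"
  shows "(edge_without Ec u (m u))\<^sup>*\<^sup>* (contract x) (contract z)"
  using reach
proof (induction rule: rtranclp_induct)
  case (step y z)
  have yz: "E y z" "{y, z} \<noteq> {u, m u}" using step(2) unfolding edge_without_def by auto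
  show ?case
  proof (cases "contract y = contract z")
    case False
    have "Ec (contract y) (contract z)"
      unfolding Ec_def using contract_in_Vc edge_in_V edge_in_V' False yz(1) by blast
    moreover have "{contract y, contract z} \<noteq> {u, m u}"
    proof
      assume eq: "{contract y, contract z} = {u, m u}"
      have mmu: "m (m u) = u" using partner_partner u unfolding Vc_def by simp
      have to_partner: "{tip, v} = {u, m u} \<Longrightarrow> v = m tip" for v
        using mmu by (auto simp: doubleton_eq_iff)
      consider "y \<in> D" "z \<notin> D" | "y \<notin> D" "z \<in> D" | "y \<notin> D" "z \<notin> D"
        using False unfolding contract_def by (auto split: if_splits)
      then show False
      proof cases
        case 1
        then have "z = m tip" using to_partner eq unfolding contract_def by simp
        then show False using no_edge_D_partner_tip 1 yz(1) by simp
      next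
        case 2
        then have "y = m tip" using to_partner eq unfolding contract_def by (simp add: insert_commute)
        then show False using no_edge_D_partner_tip 2 yz(1) edge_sym by blast
      next
        case 3
        then show False using eq yz(2) unfolding contract_def by simp
      qed
    qed
    ultimately have "edge_without Ec u (m u) (contract y) (contract z)"
      unfolding edge_without_def by simp
    with step(3) show ?thesis by (rule rtranclp.rtrancl_into_rtrancl)
  qed (use step in simp)
qed simp

lemma matching_bridge_uncontract:
  assumes "u \<in> Vc" "matching_bridge Ec m u"
  shows "matching_bridge E m u"
  unfolding matching_bridge_def
proof
  assume "(edge_without E u (m u))\<^sup>*\<^sup>* u (m u)"
  from contract_reachable[OF assms(1) this] have "(edge_without Ec u (m u))\<^sup>*\<^sup>* u (m u)"
    using assms(1) contract_Vc Vc_partner Vc_def by simp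
  then show False using assms(2) unfolding matching_bridge_def by simp
qed

end

theorem matching_bridge_exists:
  assumes "matched_graph V E m" "V \<noteq> {}" "\<nexists>cs. alt_cycle V E m cs"
  shows "\<exists>u\<in>V. matching_bridge E m u"
  using assms
proof (induction "card V" arbitrary: V E rule: less_induct)
  case less
  interpret matched_graph V E m by (rule less.prems(1))
  obtain p where p: "alt_path V E m p" "p \<noteq> []" and max: "\<And>q. alt_path V E m q \<Longrightarrow> length q \<le> length p"
    using longest_alt_path_exists[OF less.prems(2)] by blast
  have p0: "p!0 \<in> V" using alt_path_subset[OF p(1)] p(2) by (simp add: subset_iff)
  show ?case
  proof (cases "\<forall>y. E (p!0) y \<longrightarrow> y = m (p!0)")
    case True
    then show ?thesis using matching_bridge_of_leaf p0 by blast
  next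
    case False
    then obtain y where y: "E (p!0) y" "y \<noteq> m (p!0)" by blast
    then have "y \<in> set p \<union> m ` set p"
      using longest_alt_path_first_neighbour[OF p max] p(2) by (simp add: hd_conv_nth)
    then consider s where "s < length p" "y = m (p!s)" | t where "t < length p" "y = p!t"
      by (auto simp: in_set_conv_nth)
    then show ?thesis
    proof cases
      case (1 s)
      then have "0 < s" using y(2) by (cases s) auto
      then have "alt_cycle V E m (take (Suc s) p)"
        using alt_cycle_of_first_partner_edge[OF p(1)] 1 y(1) by simp
      then show ?thesis using less.prems(3) by blast
    next
      case (2 t)
      then have "0 < t" using edge_irrefl[OF y(1)] by (cases t) auto
      then interpret blossom V E m p t
        by (intro blossom.intro blossom_axioms.intro less.prems(1)) (use 2 p(1) y less.prems(3) in auto)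
      obtain u where "u \<in> Vc" "matching_bridge Ec m u"
        using less.hyps[OF card_Vc_less contracted_matched_graph _ no_contracted_alt_cycle] tip_in_Vc
        by blast
      moreover from \<open>u \<in> Vc\<close> have "u \<in> V" unfolding Vc_def by simp
      ultimately show ?thesis using matching_bridge_uncontract by blast
    qed
  qed
qed

section \<open>A vertex of small degree\<close>

text \<open>Once the matching edge \<open>{s, m s}\<close> is deleted, \<open>S \<union> {s}\<close> is a union of components.\<close>
definition hangs_off :: "('b \<Rightarrow> 'b \<Rightarrow> bool) \<Rightarrow> ('b \<Rightarrow> 'b) \<Rightarrow> 'b set \<Rightarrow> 'b \<Rightarrow> bool" where
  "hangs_off E m S s \<longleftrightarrow> s \<notin> S \<and> m s \<notin> S \<and> (\<forall>x\<in>S. m x \<in> S) \<and>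
     (\<forall>x\<in>S. \<forall>y. E x y \<longrightarrow> y \<in> S \<or> y = s) \<and> (\<forall>y. E s y \<longrightarrow> y \<in> S \<or> y = m s)"

definition bridge_side :: "('b \<Rightarrow> 'b \<Rightarrow> bool) \<Rightarrow> ('b \<Rightarrow> 'b) \<Rightarrow> 'b \<Rightarrow> 'b set" where
  "bridge_side E m u = {x. (edge_without E u (m u))\<^sup>*\<^sup>* u x}"

lemma bridge_side_step:
  "x \<in> bridge_side E m u \<Longrightarrow> E x y \<Longrightarrow> {x, y} \<noteq> {u, m u} \<Longrightarrow> y \<in> bridge_side E m u"
  unfolding bridge_side_def edge_without_def by (simp add: rtranclp.rtrancl_into_rtrancl)

context matched_graph
begin

lemma bridge_side_subset: "u \<in> V \<Longrightarrow> bridge_side E m u \<subseteq> V"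
proof
  fix x assume "u \<in> V" "x \<in> bridge_side E m u"
  then have "(edge_without E u (m u))\<^sup>*\<^sup>* u x" unfolding bridge_side_def by simp
  then show "x \<in> V" using \<open>u \<in> V\<close>
    by (induction rule: rtranclp_induct) (auto simp: edge_without_def intro: edge_in_V')
qed

lemma hangs_off_bridge_side:
  assumes u: "u \<in> V" and bridge: "matching_bridge E m u"
  shows "hangs_off E m (bridge_side E m u - {u}) u"
proof -
  let ?A = "bridge_side E m u"
  have mu: "m u \<notin> ?A" using bridge unfolding matching_bridge_def bridge_side_def by simp
  have off: "{x, y} \<noteq> {u, m u}" if "x \<noteq> u" "x \<noteq> m u" for x y
    using that by (auto simp: doubleton_eq_iff)
  have nbr: "y \<in> ?A - {u} \<or> y = u" if x: "x \<in> ?A - {u}" and xy: "E x y" for x y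
  proof -
    have "x \<noteq> u" "x \<noteq> m u" using x mu by auto
    then have "{x, y} \<noteq> {u, m u}" by (rule off)
    then show ?thesis using x xy bridge_side_step[of x E m u y] by blast
  qed
  have partner: "m x \<in> ?A - {u}" if x: "x \<in> ?A - {u}" for x
  proof -
    have "x \<in> V" using x bridge_side_subset[OF u] by blast
    then have "m x \<noteq> u" using x mu partner_partner by force
    with nbr[OF x partner_edge[OF \<open>x \<in> V\<close>]] show ?thesis by blast
  qed
  have u_nbr: "y \<in> ?A - {u} \<or> y = m u" if "E u y" for y
  proof (cases "y = m u")
    case False
    then have "{u, y} \<noteq> {u, m u}" by (auto simp: doubleton_eq_iff)
    moreover have "u \<in> ?A" unfolding bridge_side_def by simp
    ultimately have "y \<in> ?A" using bridge_side_step[of u E m u y] that by blast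
    then show ?thesis using edge_irrefl[OF that] by blast
  qed simp
  show ?thesis unfolding hangs_off_def using mu partner nbr u_nbr by blast
qed

lemma hangs_off_complement:
  assumes hang: "hangs_off E m S s" and S: "S \<subseteq> V" and s: "s \<in> V"
  shows "hangs_off E m (V - S - {s, m s}) (m s)"
proof -
  let ?T = "V - S - {s, m s}"
  have s_out: "s \<notin> S" "m s \<notin> S" and closed: "\<And>x. x \<in> S \<Longrightarrow> m x \<in> S"
    and S_nbr: "\<And>x y. x \<in> S \<Longrightarrow> E x y \<Longrightarrow> y \<in> S \<or> y = s"
    and s_nbr: "\<And>y. E s y \<Longrightarrow> y \<in> S \<or> y = m s"
    using hang unfolding hangs_off_def by blast+
  have ms: "m s \<in> V" "m (m s) = s" using s partner_in_V partner_partner by auto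
  have partner: "m x \<in> ?T" if x: "x \<in> ?T" for x
  proof -
    have xV: "x \<in> V" and mm: "m (m x) = x" using x partner_partner by auto
    have "m x \<notin> S" using closed[of "m x"] x mm by auto
    moreover have "m x \<noteq> s" "m x \<noteq> m s" using x mm ms by auto
    ultimately show ?thesis using partner_in_V[OF xV] by simp
  qed
  have nbr: "y \<in> ?T \<or> y = m s" if x: "x \<in> ?T" and xy: "E x y" for x y
  proof -
    have "y \<notin> S" using S_nbr[OF _ edge_sym[OF xy]] x by auto
    moreover have "y \<noteq> s" using s_nbr[of x] edge_sym[OF xy] x by auto
    ultimately show ?thesis using edge_in_V'[OF xy] by blast
  qed
  have ms_nbr: "y \<in> ?T \<or> y = s" if xy: "E (m s) y" for y
  proof -
    have "y \<notin> S" using S_nbr[OF _ edge_sym[OF xy]] s_out partner_neq[OF s] by auto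
    moreover have "y \<noteq> m s" using edge_irrefl[OF xy] by simp
    ultimately show ?thesis using edge_in_V'[OF xy] by blast
  qed
  show ?thesis unfolding hangs_off_def using partner nbr ms_nbr ms by auto
qed

lemma card_hangs_off_complement:
  assumes "hangs_off E m S s" "S \<subseteq> V" "s \<in> V"
  shows "card S + card (V - S - {s, m s}) + 2 = card V"
proof -
  let ?X = "S \<union> {s, m s}"
  have "s \<noteq> m s" using partner_neq[OF assms(3)] by simp
  moreover have sub: "{s, m s} \<subseteq> V" using assms(3) partner_in_V by simp
  moreover have "S \<inter> {s, m s} = {}" using assms(1) unfolding hangs_off_def by simp
  ultimately have X: "card ?X = card S + 2"
    using finite_subset[OF assms(2) finite_V] by (simp add: card_Un_disjoint)
  have XV: "?X \<subseteq> V" using assms(2) sub by simp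
  have "finite ?X" using XV finite_V finite_subset by blast
  have "card (V - ?X) = card V - card ?X" using \<open>finite ?X\<close> XV by (rule card_Diff_subset)
  moreover have "card ?X \<le> card V" using finite_V XV by (rule card_mono)
  moreover have "V - S - {s, m s} = V - ?X" by blast
  ultimately show ?thesis using X by simp
qed

lemma small_hanging_part_exists:
  assumes "u \<in> V" "matching_bridge E m u"
  obtains S s where "s \<in> V" "S \<subseteq> V" "hangs_off E m S s" "2 * card S + 2 \<le> card V"
proof -
  let ?S = "bridge_side E m u - {u}"
  have S: "hangs_off E m ?S u" "?S \<subseteq> V" using hangs_off_bridge_side bridge_side_subset assms by auto
  have T: "hangs_off E m (V - ?S - {u, m u}) (m u)" "V - ?S - {u, m u} \<subseteq> V" "m u \<in> V"
    using hangs_off_complement[OF S assms(1)] partner_in_V[OF assms(1)] by auto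
  have "card ?S + card (V - ?S - {u, m u}) + 2 = card V"
    using card_hangs_off_complement[OF S assms(1)] .
  then have "2 * card ?S + 2 \<le> card V \<or> 2 * card (V - ?S - {u, m u}) + 2 \<le> card V" by linarith
  then show thesis using that S T assms(1) by blast
qed

lemma two_le_card_partner_closed:
  assumes "S \<subseteq> V" "\<And>x. x \<in> S \<Longrightarrow> m x \<in> S" "S \<noteq> {}"
  shows "2 \<le> card S"
proof -
  obtain z where z: "z \<in> S" using assms(3) by blast
  have "z \<noteq> m z" using partner_neq z assms(1) by force
  then have "2 \<le> card {z, m z}" by simp
  also have "\<dots> \<le> card S" using z assms(2) finite_subset[OF assms(1) finite_V] by (intro card_mono) auto
  finally show ?thesis .
qed

lemma degree_le_hanging_degree:
  assumes "hangs_off E m S s" "S \<subseteq> V" "x \<in> S"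
  shows "card {y. E x y} \<le> card {y. E x y \<and> x \<in> S \<and> y \<in> S} + 1"
proof -
  let ?N = "{y. E x y \<and> x \<in> S \<and> y \<in> S}"
  have "finite ?N" using finite_subset[OF assms(2) finite_V] by simp
  moreover have "{y. E x y} \<subseteq> insert s ?N" using assms(1,3) unfolding hangs_off_def by auto
  ultimately have "card {y. E x y} \<le> card (insert s ?N)" by (intro card_mono) auto
  also have "\<dots> \<le> card ?N + 1" using \<open>finite ?N\<close> by (simp add: card_insert_if)
  finally show ?thesis .
qed

lemma restrict_matched_graph:
  assumes "S \<subseteq> V" "\<And>x. x \<in> S \<Longrightarrow> m x \<in> S"
  shows "matched_graph S (\<lambda>x y. E x y \<and> x \<in> S \<and> y \<in> S) m"
proof
  show "finite S" using finite_subset[OF assms(1) finite_V] .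
next
  fix x y assume "E x y \<and> x \<in> S \<and> y \<in> S"
  then show "x \<in> S" "E y x \<and> y \<in> S \<and> x \<in> S" "x \<noteq> y" using edge_sym edge_irrefl by auto
next
  fix x assume x: "x \<in> S"
  with assms have "x \<in> V" "m x \<in> S" by auto
  then show "m x \<in> S" "m x \<noteq> x" "m (m x) = x" "E x (m x) \<and> x \<in> S \<and> m x \<in> S"
    using x partner_neq partner_partner partner_edge by auto
qed

end

lemma alt_cycle_restrict:
  "alt_cycle S (\<lambda>x y. E x y \<and> x \<in> S \<and> y \<in> S) m cs \<Longrightarrow> S \<subseteq> V \<Longrightarrow> alt_cycle V E m cs"
  unfolding alt_cycle_def by (auto elim: alt_path_mono)

lemma log_degree_step:
  fixes d d' k n :: nat
  assumes "d \<le> d' + 1" "2 \<le> k" "2 * k + 2 \<le> n" "d' \<le> 1 \<or> real d' < log 2 k"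
  shows "d \<le> 1 \<or> real d < log 2 n"
proof -
  have "real d < log 2 n"
    using assms(4)
  proof
    assume "d' \<le> 1"
    then have "real d \<le> 2" using assms(1) by simp
    also have "2 < log 2 n" using assms(2,3) by (simp add: less_log_iff)
    finally show ?thesis .
  next
    assume "real d' < log 2 k"
    then have "real d < log 2 k + 1" using assms(1) by simp
    also have "\<dots> = log 2 (2 * k)" using assms(2) by (simp add: log_mult)
    also have "\<dots> \<le> log 2 n" using assms(2,3) by simp
    finally show ?thesis .
  qed
  then show ?thesis by simp
qed

theorem low_degree_vertex:
  assumes "matched_graph V E m" "\<nexists>cs. alt_cycle V E m cs" "2 \<le> card V"
  shows "\<exists>x\<in>V. card {y. E x y} \<le> 1 \<or> real (card {y. E x y}) < log 2 (card V)"
  using assms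
proof (induction "card V" arbitrary: V E rule: less_induct)
  case less
  interpret matched_graph V E m by (rule less.prems(1))
  have "V \<noteq> {}" using less.prems(3) by auto
  then obtain u where "u \<in> V" "matching_bridge E m u"
    using matching_bridge_exists less.prems(1,2) by blast
  then obtain S s where s: "s \<in> V" and S: "S \<subseteq> V" "hangs_off E m S s" "2 * card S + 2 \<le> card V"
    by (rule small_hanging_part_exists)
  show ?case
  proof (cases "S = {}")
    case True
    then have "{y. E s y} \<subseteq> {m s}" using S(2) unfolding hangs_off_def by auto
    then have "card {y. E s y} \<le> 1" using card_mono[of "{m s}"] by fastforce
    then show ?thesis using s by blast
  next
    case False
    let ?ES = "\<lambda>x y. E x y \<and> x \<in> S \<and> y \<in> S"
    have S_partner: "\<And>x. x \<in> S \<Longrightarrow> m x \<in> S" using S(2) unfolding hangs_off_def by blast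
    have G: "matched_graph S ?ES m" using restrict_matched_graph[OF S(1) S_partner] .
    have "2 \<le> card S" using two_le_card_partner_closed[OF S(1) S_partner False] .
    moreover have "card S < card V" using S(3) by simp
    moreover have "\<nexists>cs. alt_cycle S ?ES m cs" using alt_cycle_restrict S(1) less.prems(2) by blast
    ultimately obtain x where x: "x \<in> S"
      "card {y. ?ES x y} \<le> 1 \<or> real (card {y. ?ES x y}) < log 2 (card S)"
      using less.hyps G by blast
    have "card {y. E x y} \<le> card {y. ?ES x y} + 1"
      using degree_le_hanging_degree[OF S(2,1) x(1)] .
    then show ?thesis using log_degree_step x(2) \<open>2 \<le> card S\<close> S(3) x(1) S(1) by blast
  qed
qed

section \<open>Back to 2-edge-coloured graphs\<close>

fun opposite :: "colour \<Rightarrow> colour" where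
  "opposite Red = Blue"
| "opposite Blue = Red"

lemma opposite_neq [simp]: "opposite c \<noteq> c" "c \<noteq> opposite c"
  by (cases c; simp)+

lemma opposite_opposite [simp]: "opposite (opposite c) = c"
  by (cases c) auto

lemma eq_or_opposite: "d = c \<or> d = opposite c"
  by (cases c; cases d) auto

lemma neq_iff_opposite: "d \<noteq> c \<longleftrightarrow> d = opposite c"
  by (cases c; cases d) auto

lemma UNIV_colour: "(UNIV :: colour set) = {Red, Blue}"
  using colour.exhaust by auto

text \<open>The vertex \<open>(v, c)\<close> is the copy of \<open>v\<close> in colour \<open>c\<close>. The two copies of a vertex
  are matched to each other, and an edge \<open>uv\<close> of colour \<open>c\<close> joins \<open>(u, c)\<close> to \<open>(v, c)\<close>.
  An alternating cycle for this matching leaves each copy of \<open>u\<close> along an edge of the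
  colour of that copy, so it projects to an alternating cycle of the coloured graph.\<close>
definition colour_graph :: "'a set \<Rightarrow> ('a \<Rightarrow> 'a \<Rightarrow> colour option) \<Rightarrow> 'a \<times> colour \<Rightarrow> 'a \<times> colour \<Rightarrow> bool" where
  "colour_graph W col x y \<longleftrightarrow> fst x \<in> W \<and> fst y \<in> W \<and>
     (fst x = fst y \<and> snd x \<noteq> snd y \<or> snd x = snd y \<and> col (fst x) (fst y) = Some (snd x))"

definition recolour :: "'a \<times> colour \<Rightarrow> 'a \<times> colour" where
  "recolour x = (fst x, opposite (snd x))"

lemma colour_graph_matched:
  assumes "two_edge_coloured_graph W col"
  shows "matched_graph (W \<times> UNIV) (colour_graph W col) recolour"
proof
  show "finite (W \<times> (UNIV :: colour set))"
    using assms unfolding two_edge_coloured_graph_def by (simp add: UNIV_colour)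
next
  fix x y assume xy: "colour_graph W col x y"
  then show "x \<in> W \<times> UNIV" unfolding colour_graph_def by (auto simp: mem_Times_iff)
  show "colour_graph W col y x" "x \<noteq> y"
    using xy assms unfolding colour_graph_def two_edge_coloured_graph_def by auto
next
  fix x :: "'a \<times> colour" assume "x \<in> W \<times> UNIV"
  then show "recolour x \<in> W \<times> UNIV" "recolour x \<noteq> x" "recolour (recolour x) = x"
    "colour_graph W col x (recolour x)"
    unfolding recolour_def colour_graph_def by (auto simp: prod_eq_iff)
qed

lemma alt_cycle_edge_mod:
  assumes "alt_cycle V E m cs" "i < length cs"
  shows "E (m (cs!i)) (cs!((i + 1) mod length cs))"
proof (cases "Suc i < length cs")
  case True
  moreover have "alt_path V E m cs" using assms(1) unfolding alt_cycle_def by simp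
  ultimately show ?thesis using alt_path_edge by simp
next
  case False
  then have "i + 1 = length cs" using assms(2) by simp
  then have "i = length cs - 1" "(i + 1) mod length cs = 0" by auto
  moreover have "cs \<noteq> []" using assms(2) by auto
  ultimately show ?thesis using assms(1) unfolding alt_cycle_def by (simp add: last_conv_nth hd_conv_nth)
qed

context
  fixes W :: "'a set" and col :: "'a \<Rightarrow> 'a \<Rightarrow> colour option" and cs :: "('a \<times> colour) list"
  assumes cyc: "alt_cycle (W \<times> UNIV) (colour_graph W col) recolour cs"
begin

lemma colour_cycle_fst_inj:
  assumes "i < length cs" "j < length cs" "fst (cs!i) = fst (cs!j)"
  shows "i = j"
proof -
  have path: "alt_path (W \<times> UNIV) (colour_graph W col) recolour cs" using cyc unfolding alt_cycle_def by simp
  consider "cs!j = cs!i" | "cs!j = recolour (cs!i)"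
    using eq_or_opposite[of "snd (cs!j)" "snd (cs!i)"] assms(3) unfolding recolour_def by (auto simp: prod_eq_iff)
  then show ?thesis
    using alt_path_nth_eq_iff[OF path] alt_path_nth_neq_partner[OF path] assms(1,2) by cases auto
qed

lemma colour_cycle_step:
  assumes "i < length cs"
  defines "j \<equiv> (i + 1) mod length cs"
  shows "snd (cs!j) = opposite (snd (cs!i)) \<and> col (fst (cs!i)) (fst (cs!j)) = Some (snd (cs!j))"
proof -
  have k: "2 \<le> length cs" using cyc unfolding alt_cycle_def by simp
  then have "j < length cs" "j \<noteq> i" using assms(1) unfolding j_def by (auto simp: mod_Suc)
  then have "fst (cs!i) \<noteq> fst (cs!j)" using colour_cycle_fst_inj assms(1) by metis
  then show ?thesis using alt_cycle_edge_mod[OF cyc assms(1)]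
    unfolding colour_graph_def recolour_def j_def by auto
qed

lemma alternating_cycle_of_colour_cycle:
  assumes sym: "\<And>u v. col u v = col v u"
  shows "alternating_cycle col (map fst cs)"
proof -
  define k where "k = length cs"
  have k2: "2 \<le> k" using cyc unfolding alt_cycle_def k_def by simp
  have step: "snd (cs!((i + 1) mod k)) = opposite (snd (cs!i))"
    "col (fst (cs!i)) (fst (cs!((i + 1) mod k))) = Some (snd (cs!((i + 1) mod k)))" if "i < k" for i
    using colour_cycle_step that unfolding k_def by auto
  have "k \<noteq> 2"
  proof
    assume "k = 2"
    then have "col (fst (cs!0)) (fst (cs!1)) = Some (snd (cs!1))"
      "col (fst (cs!1)) (fst (cs!0)) = Some (snd (cs!0))" "snd (cs!1) = opposite (snd (cs!0))"
      using step[of 0] step[of 1] by auto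
    then show False using sym by (metis opposite_neq option.inject)
  qed
  then have k3: "3 \<le> k" using k2 by simp
  have dist: "distinct (map fst cs)"
    unfolding distinct_conv_nth using colour_cycle_fst_inj by auto
  have next2: "((i + 1) mod k + 1) mod k = (i + 2) mod k" for i by (simp add: mod_Suc_eq)
  have alt: "col (fst (cs!i)) (fst (cs!((i + 1) mod k))) \<noteq>
      col (fst (cs!((i + 1) mod k))) (fst (cs!((i + 2) mod k)))" if "i < k" for i
    using step[OF that] step[of "(i + 1) mod k"] k2 next2[of i] by simp
  have len: "length (map fst cs) = k" by (simp add: k_def)
  have nth: "map fst cs ! (j mod k) = fst (cs ! (j mod k))" for j
    using k2 unfolding k_def by (intro nth_map mod_less_divisor) auto
  have nth': "map fst cs ! i = fst (cs ! i)" if "i < k" for i using that by (simp add: k_def)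
  show ?thesis
    unfolding alternating_cycle_def Let_def len nth using k3 dist step(2) alt nth' by auto
qed

end

lemma colour_graph_degree:
  assumes g: "two_edge_coloured_graph W col" and v: "v \<in> W"
  shows "card {y. colour_graph W col (v, c) y} = card {u. col v u = Some c} + 1"
proof -
  have nbrs: "{u. col v u = Some c} \<subseteq> W"
    using g unfolding two_edge_coloured_graph_def by fastforce
  then have fin: "finite {u. col v u = Some c}"
    using g finite_subset unfolding two_edge_coloured_graph_def by blast
  have "{y. colour_graph W col (v, c) y} = insert (v, opposite c) ((\<lambda>u. (u, c)) ` {u. col v u = Some c})"
    using v nbrs unfolding colour_graph_def by (auto simp: image_iff neq_iff_opposite)
  moreover have "(v, opposite c) \<notin> (\<lambda>u. (u, c)) ` {u. col v u = Some c}" by auto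
  ultimately show ?thesis using fin by (simp add: card_image inj_on_def)
qed

lemma low_colour_degree_vertex:
  assumes g: "two_edge_coloured_graph W col" and n: "2 \<le> card W"
    and no_cycle: "\<nexists>cs. alternating_cycle col cs"
  shows "\<exists>v\<in>W. \<exists>c. real (card {u. col v u = Some c}) < log 2 (card W)"
proof -
  have sym: "\<And>u v. col u v = col v u" using g unfolding two_edge_coloured_graph_def by blast
  have card: "card (W \<times> (UNIV :: colour set)) = 2 * card W"
    by (simp add: card_cartesian_product UNIV_colour)
  obtain x where x: "x \<in> W \<times> UNIV" and deg:
      "card {y. colour_graph W col x y} \<le> 1 \<or>
       real (card {y. colour_graph W col x y}) < log 2 (card (W \<times> (UNIV :: colour set)))"
    using low_degree_vertex[OF colour_graph_matched[OF g]] alternating_cycle_of_colour_cycle sym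
      no_cycle card n by fastforce
  obtain v c where v: "x = (v, c)" "v \<in> W" using x by auto
  have "log 2 (card W) \<ge> 1" using n by simp
  moreover have "log 2 (card (W \<times> (UNIV :: colour set))) = log 2 (card W) + 1"
    using card n by (simp add: log_mult)
  ultimately have "real (card {u. col v u = Some c}) < log 2 (card W)"
    using deg colour_graph_degree[OF g v(2)] v(1) by auto
  then show ?thesis using v(2) by blast
qed

definition restrict_colouring :: "('a \<Rightarrow> 'a \<Rightarrow> 'c option) \<Rightarrow> 'a set \<Rightarrow> 'a \<Rightarrow> 'a \<Rightarrow> 'c option" where
  "restrict_colouring col W x y = (if x \<in> W \<and> y \<in> W then col x y else None)"

lemma two_edge_coloured_graph_restrict:
  "two_edge_coloured_graph V col \<Longrightarrow> W \<subseteq> V \<Longrightarrow> two_edge_coloured_graph W (restrict_colouring col W)"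
  unfolding two_edge_coloured_graph_def restrict_colouring_def by (auto intro: finite_subset)

lemma alternating_cycle_restrict:
  assumes cyc: "alternating_cycle (restrict_colouring col W) cs"
  shows "alternating_cycle col cs"
proof -
  let ?k = "length cs"
  have k3: "3 \<le> ?k"
    and edge: "\<And>i. i < ?k \<Longrightarrow> restrict_colouring col W (cs!i) (cs!((i + 1) mod ?k)) \<noteq> None"
    using cyc unfolding alternating_cycle_def Let_def by auto
  have same: "col (cs!i) (cs!((i + 1) mod ?k)) = restrict_colouring col W (cs!i) (cs!((i + 1) mod ?k))"
    if "i < ?k" for i
    using edge[OF that] unfolding restrict_colouring_def by (auto split: if_splits)
  have "col (cs!((i + 1) mod ?k)) (cs!((i + 2) mod ?k)) =
      restrict_colouring col W (cs!((i + 1) mod ?k)) (cs!((i + 2) mod ?k))" for i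
  proof -
    have "(i + 1) mod ?k < ?k" using k3 by (intro mod_less_divisor) auto
    from same[OF this] show ?thesis by (simp add: mod_Suc_eq)
  qed
  then show ?thesis using cyc same unfolding alternating_cycle_def Let_def by simp
qed

lemma low_colour_degree_in_subset:
  assumes g: "two_edge_coloured_graph V col" and no_cycle: "\<nexists>cs. alternating_cycle col cs"
    and n: "2 \<le> card V" and W: "W \<subseteq> V" "W \<noteq> {}"
  shows "\<exists>v\<in>W. \<exists>c. real (card {u \<in> W. col v u = Some c}) < log 2 (card V)"
proof (cases "2 \<le> card W")
  case True
  obtain v c where v: "v \<in> W"
    and deg: "real (card {u. restrict_colouring col W v u = Some c}) < log 2 (card W)"
    using low_colour_degree_vertex[OF two_edge_coloured_graph_restrict[OF g W(1)] True]
      alternating_cycle_restrict no_cycle by blast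
  have "{u. restrict_colouring col W v u = Some c} = {u \<in> W. col v u = Some c}"
    using v unfolding restrict_colouring_def by auto
  moreover have "log 2 (card W) \<le> log 2 (card V)"
    using True card_mono[OF _ W(1)] g unfolding two_edge_coloured_graph_def by simp
  ultimately have "real (card {u \<in> W. col v u = Some c}) < log 2 (card V)" using deg by simp
  then show ?thesis using v by blast
next
  case False
  have "finite W" using finite_subset[OF W(1)] g unfolding two_edge_coloured_graph_def by blast
  then have "card W \<noteq> 0" using W(2) by simp
  then have "card W = 1" using False by linarith
  then obtain v where "W = {v}" by (rule card_1_singletonE)
  moreover have "col v v = None" using g unfolding two_edge_coloured_graph_def by blast
  ultimately have empty: "{u \<in> W. col v u = Some Red} = {}" by auto
  have "0 < log 2 (card V)" using n by simp
  then have "real (card {u \<in> W. col v u = Some Red}) < log 2 (card V)" unfolding empty by simp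
  then show ?thesis using \<open>W = {v}\<close> by blast
qed

lemma later_indices_Cons:
  "{j. Suc i < j \<and> j < length (v # vs) \<and> P ((v # vs)!j)} = Suc ` {j. i < j \<and> j < length vs \<and> P (vs!j)}"
proof (rule set_eqI)
  fix j show "j \<in> {j. Suc i < j \<and> j < length (v # vs) \<and> P ((v # vs)!j)} \<longleftrightarrow>
      j \<in> Suc ` {j. i < j \<and> j < length vs \<and> P (vs!j)}"
    by (cases j) auto
qed

lemma greedy_ordering:
  fixes col :: "'a \<Rightarrow> 'a \<Rightarrow> 'c option"
  assumes "finite V"
    and low: "\<And>W. W \<subseteq> V \<Longrightarrow> W \<noteq> {} \<Longrightarrow> \<exists>v\<in>W. \<exists>c. real (card {u \<in> W. col v u = Some c}) < L"
  shows "\<exists>vs. distinct vs \<and> set vs = V \<and>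
    (\<forall>i < length vs. \<exists>c. real (card {j. i < j \<and> j < length vs \<and> col (vs!i) (vs!j) = Some c}) < L)"
  using assms(1) low
proof (induction V rule: finite_remove_induct)
  case empty
  show ?case by simp
next
  case (remove V)
  obtain v c where v: "v \<in> V" and c: "real (card {u \<in> V. col v u = Some c}) < L"
    using remove.prems[of V] remove.hyps(2) by blast
  have "\<exists>v\<in>W. \<exists>c. real (card {u \<in> W. col v u = Some c}) < L" if "W \<subseteq> V - {v}" "W \<noteq> {}" for W
    using remove.prems[of W] that by blast
  then obtain vs where vs: "distinct vs" "set vs = V - {v}" and later:
      "\<forall>i < length vs. \<exists>c. real (card {j. i < j \<and> j < length vs \<and> col (vs!i) (vs!j) = Some c}) < L"
    using remove.IH[OF v] by blast
  let ?ws = "v # vs"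
  have ws: "distinct ?ws" "set ?ws = V" using vs v by auto
  have "\<exists>c. real (card {j. i < j \<and> j < length ?ws \<and> col (?ws!i) (?ws!j) = Some c}) < L"
    if i: "i < length ?ws" for i
  proof (cases i)
    case 0
    have "card {j. 0 < j \<and> j < length ?ws \<and> col v (?ws!j) = Some c} \<le> card {u \<in> V. col v u = Some c}"
    proof (rule card_inj_on_le)
      show "inj_on ((!) ?ws) {j. 0 < j \<and> j < length ?ws \<and> col v (?ws!j) = Some c}"
        using ws(1) by (auto simp: inj_on_def nth_eq_iff_index_eq)
    qed (use ws(2) remove.hyps(1) in \<open>auto dest: nth_mem\<close>)
    then show ?thesis using c 0 by (intro exI[of _ c]) simp
  next
    case (Suc i')
    with later i obtain c' where
      c': "real (card {j. i' < j \<and> j < length vs \<and> col (vs!i') (vs!j) = Some c'}) < L" by auto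
    then show ?thesis
      using later_indices_Cons[of i' v vs "\<lambda>w. col (vs!i') w = Some c'"]
      by (intro exI[of _ c']) (simp add: Suc card_image)
  qed
  then show ?case using ws by blast
qed

theorem mainTheorem3:
  fixes V :: "'a set" and col :: "'a \<Rightarrow> 'a \<Rightarrow> colour option"
  assumes "two_edge_coloured_graph V col"
    and "card V \<ge> 2"
    and "\<not> (\<exists>cs. alternating_cycle col cs)"
  shows "\<exists>vs. distinct vs \<and> set vs = V \<and>
           (\<forall>i < length vs. \<exists>c :: colour.
              real (card {j. i < j \<and> j < length vs \<and> col (vs!i) (vs!j) = Some c})
                < log 2 (real (card V)))"
proof (rule greedy_ordering)
  show "finite V" using assms(1) unfolding two_edge_coloured_graph_def by simp
  show "\<exists>v\<in>W. \<exists>c. real (card {u \<in> W. col v u = Some c}) < log 2 (real (card V))"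
    if "W \<subseteq> V" "W \<noteq> {}" for W
    using low_colour_degree_in_subset assms that by blast
qed

end
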